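(* For every graph $G$, we have $\lfloor \mathrm{sp}\rfloor(G)\geq|V(G)|-\mathrm{diam}(G)-1$. Moreover, if $\mathrm{usp}(G)\leq\mathrm{diam}(G)$, then $\lfloor \mathrm{sp}\rfloor(G)\geq|V(G)|-\mathrm{diam}(G)$.
   Context: All graphs are finite, have at least one vertex, have no loops, and may have multiple (parallel) edges. $\mathrm{diam}(G)$ is the diameter of $G$ (maximum distance, in number of edges, between two vertices). A unique shortest path is a shortest $u$–$v$ path $P$ such that every $u$–$v$ path with the same number of vertices is identical to $P$, where two paths with different edge sequences are different even if their vertex sequences agree; a single vertex is a unique shortest path. The parade number $\mathrm{usp}(G)$ is the largest number of vertices of a unique shortest path in $G$. The spectator number is $\mathrm{sp}(G)=|V(G)|-\mathrm{usp}(G)$. A minor of $H$ is any graph obtained from $H$ by a sequence of: deleting an isolated vertex, deleting an edge, contracting an edge that has no edge parallel to it. The spectator floor $\lfloor \mathrm{sp}\rfloor(G)$ is the minimum of $\mathrm{sp}(H)$ over all graphs $H$ of which $G$ is a minor. *)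

theory Defs
  imports Main "HOL-Library.Extended_Nat"
begin

text \<open>Finite multigraphs (parallel edges allowed, no loops, at least one vertex).
  Each edge e has a set of two distinct endpoints ends e.\<close>

record ('v, 'e) mgraph =
  verts :: "'v set"
  edges :: "'e set"
  ends  :: "'e \<Rightarrow> 'v set"

definition mgraph :: "('v, 'e) mgraph \<Rightarrow> bool" where
  "mgraph G \<longleftrightarrow> finite (verts G) \<and> finite (edges G) \<and> verts G \<noteq> {} \<and>
     (\<forall>e\<in>edges G. ends G e \<subseteq> verts G \<and> card (ends G e) = 2)"

text \<open>A path is a pair (vertex sequence, edge sequence): distinct vertices, consecutive
  vertices joined by the corresponding edge. Paths with different edge sequences
  are different.\<close>

definition is_path :: "('v, 'e) mgraph \<Rightarrow> 'v list \<Rightarrow> 'e list \<Rightarrow> bool" where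
  "is_path G vs es \<longleftrightarrow> vs \<noteq> [] \<and> distinct vs \<and> set vs \<subseteq> verts G \<and>
     length es + 1 = length vs \<and>
     (\<forall>i < length es. es ! i \<in> edges G \<and> ends G (es ! i) = {vs ! i, vs ! Suc i})"

definition is_uv_path :: "('v, 'e) mgraph \<Rightarrow> 'v \<Rightarrow> 'v \<Rightarrow> 'v list \<Rightarrow> 'e list \<Rightarrow> bool" where
  "is_uv_path G u v vs es \<longleftrightarrow> is_path G vs es \<and> hd vs = u \<and> last vs = v"

definition gdist :: "('v, 'e) mgraph \<Rightarrow> 'v \<Rightarrow> 'v \<Rightarrow> enat" where
  "gdist G u v = (INF p \<in> {(vs, es). is_uv_path G u v vs es}. enat (length (snd p)))"

definition diam :: "('v, 'e) mgraph \<Rightarrow> enat" where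
  "diam G = (SUP u \<in> verts G. SUP v \<in> verts G. gdist G u v)"

definition is_shortest_path :: "('v, 'e) mgraph \<Rightarrow> 'v list \<Rightarrow> 'e list \<Rightarrow> bool" where
  "is_shortest_path G vs es \<longleftrightarrow> is_path G vs es \<and>
     (\<forall>vs' es'. is_uv_path G (hd vs) (last vs) vs' es' \<longrightarrow> length vs \<le> length vs')"

definition is_usp :: "('v, 'e) mgraph \<Rightarrow> 'v list \<Rightarrow> 'e list \<Rightarrow> bool" where
  "is_usp G vs es \<longleftrightarrow> is_shortest_path G vs es \<and>
     (\<forall>vs' es'. is_uv_path G (hd vs) (last vs) vs' es' \<and> length vs' = length vs
        \<longrightarrow> vs' = vs \<and> es' = es)"

definition usp :: "('v, 'e) mgraph \<Rightarrow> nat" where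
  "usp G = Max {length vs | vs es. is_usp G vs es}"

definition sp :: "('v, 'e) mgraph \<Rightarrow> nat" where
  "sp G = card (verts G) - usp G"

definition mg_iso :: "('v, 'e) mgraph \<Rightarrow> ('w, 'f) mgraph \<Rightarrow> bool" where
  "mg_iso G H \<longleftrightarrow> (\<exists>f g. bij_betw f (verts G) (verts H) \<and> bij_betw g (edges G) (edges H) \<and>
     (\<forall>e\<in>edges G. ends H (g e) = f ` ends G e))"

definition minor_step :: "('v, 'e) mgraph \<Rightarrow> ('v, 'e) mgraph \<Rightarrow> bool" where
  "minor_step H H' \<longleftrightarrow> mgraph H' \<and>
    ((\<exists>v\<in>verts H. (\<forall>e\<in>edges H. v \<notin> ends H e) \<and>
        H' = \<lparr>verts = verts H - {v}, edges = edges H, ends = ends H\<rparr>)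
   \<or> (\<exists>e\<in>edges H. H' = \<lparr>verts = verts H, edges = edges H - {e}, ends = ends H\<rparr>)
   \<or> (\<exists>e\<in>edges H. \<exists>a b. ends H e = {a, b} \<and> a \<noteq> b \<and>
        (\<forall>e'\<in>edges H. e' \<noteq> e \<longrightarrow> ends H e' \<noteq> {a, b}) \<and>
        H' = \<lparr>verts = verts H - {b}, edges = edges H - {e},
               ends = (\<lambda>e'. (\<lambda>x. if x = b then a else x) ` ends H e')\<rparr>))"

definition is_minor :: "('w, 'f) mgraph \<Rightarrow> ('v, 'e) mgraph \<Rightarrow> bool" where
  "is_minor G H \<longleftrightarrow> (\<exists>H'. minor_step\<^sup>*\<^sup>* H H' \<and> mg_iso H' G)"

text \<open>Spectator floor: minimum of sp H over all graphs H having G as a minor.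
  Every finite graph is isomorphic to one with vertex and edge type nat, so it
  suffices to range over those.\<close>

definition sp_floor :: "('w, 'f) mgraph \<Rightarrow> nat" where
  "sp_floor G = Inf {sp H | H :: (nat, nat) mgraph. mgraph H \<and> is_minor G H}"

end

theory Submission
  imports Defs
begin

text \<open>
  For vertices \<open>x\<close>, \<open>y\<close> of one component let the parade weight \<open>w(x, y)\<close> be the number of
  vertices of the unique shortest \<open>x\<close>-\<open>y\<close> path if there is one, and their distance otherwise,
  and let \<open>\<Psi>(K)\<close> be the largest value of \<open>|C| - max {w(x, y) | x, y \<in> C}\<close> over the components
  \<open>C\<close> of \<open>K\<close>. A longest unique shortest path either lies in \<open>C\<close>, where it has at most
  \<open>max w\<close> vertices, or misses \<open>C\<close>; hence \<open>\<Psi>(K) \<le> sp(K)\<close>.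

  No minor operation increases \<open>\<Psi>\<close>. Deleting an isolated vertex or an edge can only raise
  the weight of a pair that stays connected; when deleting an edge disconnects a geodesic, the
  part cut off from the component of the remaining graph is paid for by the vertices the
  component loses. Contracting an edge lowers weights by at most one, and only in the component
  that loses a vertex.

  If \<open>G\<close> is a minor of \<open>H\<close> and has finite diameter \<open>d\<close>, then \<open>G\<close> is connected with all weights
  at most \<open>max (usp G) d\<close>, so \<open>sp(H) \<ge> \<Psi>(H) \<ge> \<Psi>(G) \<ge> |V(G)| - max (usp G) d\<close>, and
  \<open>usp G \<le> d + 1\<close>.
\<close>

lemma distinct_length_le_card: "finite A \<Longrightarrow> set xs \<subseteq> A \<Longrightarrow> distinct xs \<Longrightarrow> length xs \<le> card A"
  using card_mono distinct_card by metis

section \<open>Walks and distances\<close>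

fun walk :: "('v, 'e) mgraph \<Rightarrow> 'v list \<Rightarrow> 'e list \<Rightarrow> bool" where
  "walk K [v] [] \<longleftrightarrow> v \<in> verts K"
| "walk K (v # w # vs) (f # es) \<longleftrightarrow>
     f \<in> edges K \<and> ends K f = {v, w} \<and> v \<in> verts K \<and> walk K (w # vs) es"
| "walk K _ _ \<longleftrightarrow> False"

lemma walk_length: "walk K vs es \<Longrightarrow> length vs = Suc (length es)"
  by (induction K vs es rule: walk.induct) auto

lemma walk_not_Nil: "walk K vs es \<Longrightarrow> vs \<noteq> []"
  by (induction K vs es rule: walk.induct) auto

lemma walk_set_verts: "walk K vs es \<Longrightarrow> set vs \<subseteq> verts K"
  by (induction K vs es rule: walk.induct) auto

lemma walk_set_edges: "walk K vs es \<Longrightarrow> set es \<subseteq> edges K"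
  by (induction K vs es rule: walk.induct) auto

lemma walk_Cons:
  "walk K ws fs \<Longrightarrow> f \<in> edges K \<Longrightarrow> ends K f = {v, hd ws} \<Longrightarrow> v \<in> verts K \<Longrightarrow>
   walk K (v # ws) (f # fs)"
  by (cases ws; cases fs) auto

lemma walk_conv_nth:
  "walk K vs es \<longleftrightarrow> vs \<noteq> [] \<and> set vs \<subseteq> verts K \<and> length es + 1 = length vs \<and>
     (\<forall>i < length es. es ! i \<in> edges K \<and> ends K (es ! i) = {vs ! i, vs ! Suc i})"
proof (induction es arbitrary: vs)
  case Nil
  then show ?case by (cases vs) (auto elim: walk.elims)
next
  case (Cons f es)
  show ?case
  proof (cases vs)
    case (Cons v vs')
    then show ?thesis
      using Cons.IH[of vs'] by (cases vs') (auto simp: less_Suc_eq_0_disj)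
  qed simp
qed

lemma is_path_iff_walk: "is_path K vs es \<longleftrightarrow> walk K vs es \<and> distinct vs"
  unfolding is_path_def walk_conv_nth by auto

lemma walk_append_edge:
  "walk K vs1 es1 \<Longrightarrow> walk K vs2 es2 \<Longrightarrow> f \<in> edges K \<Longrightarrow> ends K f = {last vs1, hd vs2} \<Longrightarrow>
   walk K (vs1 @ vs2) (es1 @ f # es2)"
proof (induction K vs1 es1 rule: walk.induct)
  case (1 K v)
  then show ?case by (cases vs2) (auto dest: walk_not_Nil)
qed auto

lemma walk_append:
  "walk K vs1 es1 \<Longrightarrow> walk K vs2 es2 \<Longrightarrow> last vs1 = hd vs2 \<Longrightarrow>
   walk K (vs1 @ tl vs2) (es1 @ es2)"
proof (induction K vs1 es1 rule: walk.induct)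
  case (1 K v)
  then show ?case by (cases vs2) auto
next
  case (2 K v w vs f' es)
  then show ?case by (cases vs2) auto
qed auto

lemma walk_split_edge:
  assumes "walk K vs (es1 @ f # es2)"
  obtains vs1 vs2 where "vs = vs1 @ vs2" "walk K vs1 es1" "walk K vs2 es2"
    "f \<in> edges K" "ends K f = {last vs1, hd vs2}"
proof -
  have "\<exists>vs1 vs2. vs = vs1 @ vs2 \<and> walk K vs1 es1 \<and> walk K vs2 es2 \<and>
      f \<in> edges K \<and> ends K f = {last vs1, hd vs2}"
    using assms
  proof (induction es1 arbitrary: vs)
    case Nil
    then obtain v w rest where vs: "vs = v # w # rest"
      by (cases vs; cases "tl vs") auto
    show ?case
      by (rule exI[of _ "[v]"], rule exI[of _ "w # rest"]) (use Nil vs in auto)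
  next
    case (Cons g es1)
    then obtain v w rest where vs: "vs = v # w # rest"
      by (cases vs; cases "tl vs") auto
    with Cons.prems have tail: "walk K (w # rest) (es1 @ f # es2)"
      and g: "g \<in> edges K" "ends K g = {v, w}" "v \<in> verts K"
      by auto
    from Cons.IH[OF tail] obtain vs1 vs2 where split: "w # rest = vs1 @ vs2" "walk K vs1 es1"
      "walk K vs2 es2" "f \<in> edges K" "ends K f = {last vs1, hd vs2}"
      by blast
    have "vs1 \<noteq> []" using split(2) walk_not_Nil by blast
    then have "hd vs1 = w" using split(1) by (cases vs1) auto
    then have "walk K (v # vs1) (g # es1)" using split(2) g by (intro walk_Cons) auto
    moreover have "vs = (v # vs1) @ vs2" using vs split(1) by simp
    moreover have "last (v # vs1) = last vs1" using \<open>vs1 \<noteq> []\<close> by simp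
    ultimately show ?case using split(3-5) by metis
  qed
  with that show ?thesis by blast
qed

lemma walk_rev: "walk K vs es \<Longrightarrow> walk K (rev vs) (rev es)"
proof (induction K vs es rule: walk.induct)
  case (2 K v w vs f es)
  then have "walk K (rev (w # vs) @ [v]) (rev es @ [f])"
    by (intro walk_append_edge) (auto simp: insert_commute)
  then show ?case by simp
qed auto

lemma walk_drop: "walk K vs es \<Longrightarrow> k < length vs \<Longrightarrow> walk K (drop k vs) (drop k es)"
proof (induction k arbitrary: vs es)
  case (Suc k)
  then obtain v w rest f es' where "vs = v # w # rest" "es = f # es'"
    by (cases vs; cases "tl vs"; cases es) auto
  with Suc show ?case by auto
qed auto

lemma walk_edge_ends_subset: "walk K vs es \<Longrightarrow> f \<in> set es \<Longrightarrow> ends K f \<subseteq> set vs"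
  by (induction K vs es rule: walk.induct) auto

lemma walk_distinct_edges: "walk K vs es \<Longrightarrow> distinct vs \<Longrightarrow> distinct es"
proof (induction K vs es rule: walk.induct)
  case (2 K v w vs f es)
  then have "f \<notin> set es" using walk_edge_ends_subset[of K "w # vs" es f] by auto
  with 2 show ?case by auto
qed auto

lemma walk_eq_if_edges_eq: "walk K vs es \<Longrightarrow> walk K ws es \<Longrightarrow> hd vs = hd ws \<Longrightarrow> vs = ws"
proof (induction K vs es arbitrary: ws rule: walk.induct)
  case (1 K v)
  then show ?case by (cases ws; cases "tl ws") auto
next
  case (2 K v w vs f es)
  then obtain w' ws' where ws: "ws = v # w' # ws'" "ends K f = {v, w'}" "walk K (w' # ws') es"
    by (cases ws; cases "tl ws") auto
  with 2(2) have "w' = w" by (auto simp: doubleton_eq_iff)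
  with 2 ws show ?case by fastforce
qed auto

lemma walk_shortcut:
  assumes "walk K vs es" "\<not> distinct vs"
  obtains vs' es' where "walk K vs' es'" "hd vs' = hd vs" "last vs' = last vs"
    "length es' < length es"
proof -
  have "\<exists>vs' es'. walk K vs' es' \<and> hd vs' = hd vs \<and> last vs' = last vs \<and>
      length es' < length es"
    using assms
  proof (induction K vs es rule: walk.induct)
    case (2 K v w vs f es)
    show ?case
    proof (cases "v \<in> set (w # vs)")
      case True
      then obtain k where k: "k < length (w # vs)" "(w # vs) ! k = v"
        by (metis in_set_conv_nth)
      with 2(2) have "walk K (drop k (w # vs)) (drop k es)" by (intro walk_drop) auto
      with k show ?thesis
        by (intro exI[of _ "drop k (w # vs)"] exI[of _ "drop k es"]) (auto simp: hd_drop_conv_nth)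
    next
      case False
      with 2 obtain vs' es' where vs': "walk K vs' es'" "hd vs' = w" "last vs' = last (w # vs)"
        "length es' < length es"
        by auto
      have "vs' \<noteq> []" using vs'(1) walk_not_Nil by blast
      with vs' 2(2) have "walk K (v # vs') (f # es')" by (intro walk_Cons) auto
      with vs' \<open>vs' \<noteq> []\<close> show ?thesis by (intro exI[of _ "v # vs'"] exI[of _ "f # es'"]) auto
    qed
  qed auto
  with that show ?thesis by blast
qed

definition walk_between :: "('v, 'e) mgraph \<Rightarrow> 'v \<Rightarrow> 'v \<Rightarrow> 'v list \<Rightarrow> 'e list \<Rightarrow> bool" where
  "walk_between K x y vs es \<longleftrightarrow> walk K vs es \<and> hd vs = x \<and> last vs = y"

definition reachable :: "('v, 'e) mgraph \<Rightarrow> 'v \<Rightarrow> 'v \<Rightarrow> bool" where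
  "reachable K x y \<longleftrightarrow> (\<exists>vs es. walk_between K x y vs es)"

text \<open>Meaningful only for reachable pairs; otherwise \<open>LEAST\<close> yields an unspecified value.\<close>

definition walk_dist :: "('v, 'e) mgraph \<Rightarrow> 'v \<Rightarrow> 'v \<Rightarrow> nat" where
  "walk_dist K x y = (LEAST n. \<exists>vs es. walk_between K x y vs es \<and> length es = n)"

lemma walk_dist_le: "walk_between K x y vs es \<Longrightarrow> walk_dist K x y \<le> length es"
  unfolding walk_dist_def by (rule Least_le) blast

lemma walk_between_reachable: "walk_between K x y vs es \<Longrightarrow> reachable K x y"
  unfolding reachable_def by blast

lemma shortest_walk_distinct:
  assumes "walk_between K x y vs es" "length es \<le> walk_dist K x y"
  shows "distinct vs" "length es = walk_dist K x y"
proof -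
  show "distinct vs"
  proof (rule ccontr)
    assume "\<not> distinct vs"
    with assms(1) obtain vs' es' where "walk_between K x y vs' es'" "length es' < length es"
      unfolding walk_between_def by (metis walk_shortcut)
    with assms(2) show False using walk_dist_le by fastforce
  qed
  show "length es = walk_dist K x y" using assms walk_dist_le by fastforce
qed

lemma walk_dist_attained:
  assumes "reachable K x y"
  obtains vs es where "walk_between K x y vs es" "distinct vs" "length es = walk_dist K x y"
proof -
  from assms have "\<exists>n vs es. walk_between K x y vs es \<and> length es = n"
    unfolding reachable_def by blast
  from LeastI_ex[OF this] obtain vs es where "walk_between K x y vs es" "length es = walk_dist K x y"
    unfolding walk_dist_def by blast
  with shortest_walk_distinct that show ?thesis by (metis order_refl)
qed

lemma walk_between_append:
  assumes "walk_between K x y vs1 es1" "walk_between K y z vs2 es2"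
  shows "walk_between K x z (vs1 @ tl vs2) (es1 @ es2)"
proof -
  have "vs1 \<noteq> []" "vs2 \<noteq> []" using assms walk_not_Nil unfolding walk_between_def by auto
  with assms have "hd (vs1 @ tl vs2) = x" "last (vs1 @ tl vs2) = z"
    by (cases vs2; cases "tl vs2"; auto simp: walk_between_def)+
  moreover have "walk K (vs1 @ tl vs2) (es1 @ es2)"
    using assms by (intro walk_append) (auto simp: walk_between_def)
  ultimately show ?thesis unfolding walk_between_def by blast
qed

lemma walk_between_rev: "walk_between K x y vs es \<Longrightarrow> walk_between K y x (rev vs) (rev es)"
  unfolding walk_between_def by (metis walk_rev walk_not_Nil hd_rev last_rev)

lemma reachable_refl: "x \<in> verts K \<Longrightarrow> reachable K x x"
  unfolding reachable_def walk_between_def by (intro exI[of _ "[x]"] exI[of _ "[]"]) simp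

lemma reachable_trans: "reachable K x y \<Longrightarrow> reachable K y z \<Longrightarrow> reachable K x z"
  unfolding reachable_def by (metis walk_between_append)

lemma reachable_sym: "reachable K x y \<Longrightarrow> reachable K y x"
  unfolding reachable_def by (metis walk_between_rev)

lemma reachable_verts: "reachable K x y \<Longrightarrow> x \<in> verts K \<and> y \<in> verts K"
  unfolding reachable_def walk_between_def
  by (metis walk_set_verts walk_not_Nil hd_in_set last_in_set subsetD)

lemma walk_reachable_last: "walk K vs es \<Longrightarrow> z \<in> set vs \<Longrightarrow> reachable K z (last vs)"
proof -
  assume "walk K vs es" "z \<in> set vs"
  then obtain k where "k < length vs" "vs ! k = z" by (metis in_set_conv_nth)
  with \<open>walk K vs es\<close> have "walk_between K z (last vs) (drop k vs) (drop k es)"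
    unfolding walk_between_def by (auto intro: walk_drop simp: hd_drop_conv_nth)
  then show ?thesis by (rule walk_between_reachable)
qed

lemma walk_reachable_hd: "walk K vs es \<Longrightarrow> z \<in> set vs \<Longrightarrow> reachable K (hd vs) z"
  by (metis walk_reachable_last walk_rev walk_not_Nil reachable_sym set_rev last_rev)

lemma walk_dist_triangle:
  "reachable K x y \<Longrightarrow> reachable K y z \<Longrightarrow> walk_dist K x z \<le> walk_dist K x y + walk_dist K y z"
  by (metis walk_dist_attained walk_between_append walk_dist_le length_append)

lemma walk_dist_commute: "walk_dist K x y = walk_dist K y x"
  unfolding walk_dist_def by (metis walk_between_rev rev_rev_ident length_rev)

lemma is_uv_path_iff_walk_between:
  "is_uv_path K x y vs es \<longleftrightarrow> walk_between K x y vs es \<and> distinct vs"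
  unfolding is_uv_path_def walk_between_def is_path_iff_walk by auto

section \<open>Unique geodesics and the parade weight\<close>

text \<open>Quantifying over walks rather than paths, as \<open>is_usp\<close> does, is equivalent
  (\<open>is_usp_iff_unique_geodesic\<close>) and spares distinctness arguments.\<close>

definition unique_geodesic :: "('v, 'e) mgraph \<Rightarrow> 'v list \<Rightarrow> 'e list \<Rightarrow> bool" where
  "unique_geodesic K vs es \<longleftrightarrow> walk K vs es \<and>
     (\<forall>ws fs. walk_between K (hd vs) (last vs) ws fs \<and> length fs \<le> length es \<longrightarrow>
        ws = vs \<and> fs = es)"

definition has_unique_geodesic :: "('v, 'e) mgraph \<Rightarrow> 'v \<Rightarrow> 'v \<Rightarrow> bool" where
  "has_unique_geodesic K x y \<longleftrightarrow> (\<exists>vs es. unique_geodesic K vs es \<and> hd vs = x \<and> last vs = y)"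

lemma unique_geodesicD:
  "unique_geodesic K vs es \<Longrightarrow> walk_between K (hd vs) (last vs) ws fs \<Longrightarrow>
   length fs \<le> length es \<Longrightarrow> ws = vs \<and> fs = es"
  unfolding unique_geodesic_def by blast

lemma unique_geodesic_walk_between:
  "unique_geodesic K vs es \<Longrightarrow> walk_between K (hd vs) (last vs) vs es"
  unfolding unique_geodesic_def walk_between_def by blast

lemma unique_geodesic_length:
  assumes "unique_geodesic K vs es"
  shows "length es = walk_dist K (hd vs) (last vs)"
proof -
  have w: "walk_between K (hd vs) (last vs) vs es"
    using assms by (rule unique_geodesic_walk_between)
  then obtain ws fs where ws: "walk_between K (hd vs) (last vs) ws fs"
    "length fs = walk_dist K (hd vs) (last vs)"
    using walk_dist_attained[OF walk_between_reachable[OF w]] by blast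
  with w have "length fs \<le> length es" using walk_dist_le by simp
  with unique_geodesicD[OF assms ws(1)] ws(2) show ?thesis by simp
qed

lemma unique_geodesic_distinct:
  assumes "unique_geodesic K vs es"
  shows "distinct vs"
  using shortest_walk_distinct(1)[OF unique_geodesic_walk_between[OF assms]]
    unique_geodesic_length[OF assms] by simp

lemma unique_geodesic_if_is_usp:
  assumes "is_usp K vs es"
  shows "unique_geodesic K vs es"
proof -
  from assms have vs_walk: "walk K vs es"
    and shortest: "\<forall>vs' es'. is_uv_path K (hd vs) (last vs) vs' es' \<longrightarrow> length vs \<le> length vs'"
    and uniq: "\<forall>vs' es'. is_uv_path K (hd vs) (last vs) vs' es' \<and> length vs' = length vs \<longrightarrow>
      vs' = vs \<and> es' = es"
    unfolding is_usp_def is_shortest_path_def is_path_iff_walk by blast+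
  have w: "walk_between K (hd vs) (last vs) vs es" using vs_walk unfolding walk_between_def by simp
  have len: "length es = walk_dist K (hd vs) (last vs)"
  proof -
    obtain ps qs where ps: "walk_between K (hd vs) (last vs) ps qs" "distinct ps"
      "length qs = walk_dist K (hd vs) (last vs)"
      using walk_dist_attained[OF walk_between_reachable[OF w]] by blast
    then have "length vs \<le> length ps" using shortest unfolding is_uv_path_iff_walk_between by blast
    then have "length es \<le> length qs"
      using walk_length[OF vs_walk] ps(1) walk_length[of K ps qs] unfolding walk_between_def by simp
    with ps(3) walk_dist_le[OF w] show ?thesis by simp
  qed
  have "ws = vs \<and> fs = es"
    if ws: "walk_between K (hd vs) (last vs) ws fs" "length fs \<le> length es" for ws fs
  proof -
    from ws len have "distinct ws" "length fs = length es"
      using shortest_walk_distinct[OF ws(1)] by auto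
    with ws(1) have "is_uv_path K (hd vs) (last vs) ws fs" "length ws = length vs"
      using walk_length[OF vs_walk] walk_length[of K ws fs]
      unfolding is_uv_path_iff_walk_between walk_between_def by auto
    with uniq show ?thesis by simp
  qed
  with vs_walk show ?thesis unfolding unique_geodesic_def by blast
qed

lemma is_usp_if_unique_geodesic:
  assumes u: "unique_geodesic K vs es"
  shows "is_usp K vs es"
proof -
  from u have w: "walk_between K (hd vs) (last vs) vs es"
    and len: "length es = walk_dist K (hd vs) (last vs)"
    by (rule unique_geodesic_walk_between, rule unique_geodesic_length)
  have "length vs \<le> length vs'" if "is_uv_path K (hd vs) (last vs) vs' es'" for vs' es'
  proof -
    have "walk_between K (hd vs) (last vs) vs' es'"
      using that unfolding is_uv_path_iff_walk_between by blast
    with len have "length es \<le> length es'" using walk_dist_le by simp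
    with w \<open>walk_between K (hd vs) (last vs) vs' es'\<close> show ?thesis
      using walk_length[of K vs es] walk_length[of K vs' es'] unfolding walk_between_def by simp
  qed
  moreover have "vs' = vs \<and> es' = es"
    if "is_uv_path K (hd vs) (last vs) vs' es'" "length vs' = length vs" for vs' es'
  proof -
    have "walk_between K (hd vs) (last vs) vs' es'"
      using that unfolding is_uv_path_iff_walk_between by blast
    moreover from this w that(2) have "length es' \<le> length es"
      using walk_length[of K vs es] walk_length[of K vs' es'] unfolding walk_between_def by simp
    ultimately show ?thesis by (rule unique_geodesicD[OF u])
  qed
  ultimately show ?thesis
    using w unique_geodesic_distinct[OF u]
    unfolding is_usp_def is_shortest_path_def is_path_iff_walk walk_between_def by blast
qed

lemma is_usp_iff_unique_geodesic: "is_usp K vs es \<longleftrightarrow> unique_geodesic K vs es"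
  by (blast intro: unique_geodesic_if_is_usp is_usp_if_unique_geodesic)

lemma unique_geodesic_singleton:
  assumes "v \<in> verts K"
  shows "unique_geodesic K [v] []"
proof -
  have "ws = [v]" if "walk_between K v v ws []" for ws
    using that walk_length[of K ws "[]"] unfolding walk_between_def by (cases ws) auto
  with assms show ?thesis unfolding unique_geodesic_def by auto
qed

lemma unique_geodesic_rev:
  assumes "unique_geodesic K vs es"
  shows "unique_geodesic K (rev vs) (rev es)"
proof -
  have ne: "vs \<noteq> []" using assms walk_not_Nil unfolding unique_geodesic_def by blast
  have "ws = rev vs \<and> fs = rev es"
    if "walk_between K (hd (rev vs)) (last (rev vs)) ws fs" "length fs \<le> length (rev es)" for ws fs
    using that walk_between_rev[OF that(1)] unique_geodesicD[OF assms, of "rev ws" "rev fs"] ne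
    by (auto simp: hd_rev last_rev)
  with assms show ?thesis unfolding unique_geodesic_def by (auto intro: walk_rev)
qed

lemma has_unique_geodesic_commute:
  assumes "has_unique_geodesic K x y"
  shows "has_unique_geodesic K y x"
proof -
  from assms obtain vs es where "unique_geodesic K vs es" "hd vs = x" "last vs = y"
    unfolding has_unique_geodesic_def by blast
  moreover from this have "vs \<noteq> []" using walk_not_Nil unfolding unique_geodesic_def by blast
  ultimately show ?thesis
    unfolding has_unique_geodesic_def using unique_geodesic_rev by (fastforce simp: hd_rev last_rev)
qed

lemma unique_geodesic_prefix:
  assumes u: "unique_geodesic K (vs1 @ vs2) (es1 @ f # es2)"
    and w: "walk K vs1 es1" "walk K vs2 es2" "f \<in> edges K" "ends K f = {last vs1, hd vs2}"
  shows "unique_geodesic K vs1 es1"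
proof -
  have ne: "vs1 \<noteq> []" "vs2 \<noteq> []" using w walk_not_Nil by auto
  have "ws = vs1 \<and> fs = es1"
    if ws: "walk_between K (hd vs1) (last vs1) ws fs" "length fs \<le> length es1" for ws fs
  proof -
    have "ws \<noteq> []" using ws walk_not_Nil unfolding walk_between_def by blast
    with ws w ne have "walk_between K (hd (vs1 @ vs2)) (last (vs1 @ vs2)) (ws @ vs2) (fs @ f # es2)"
      unfolding walk_between_def by (auto intro: walk_append_edge)
    from unique_geodesicD[OF u this] ws(2) show ?thesis by simp
  qed
  with w show ?thesis unfolding unique_geodesic_def by blast
qed

lemma geodesic_exists:
  assumes "reachable K x y"
  obtains vs es where "walk_between K x y vs es" "distinct vs" "length es = walk_dist K x y"
    "has_unique_geodesic K x y \<Longrightarrow> unique_geodesic K vs es"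
proof (cases "has_unique_geodesic K x y")
  case True
  then obtain vs es where u: "unique_geodesic K vs es" "hd vs = x" "last vs = y"
    unfolding has_unique_geodesic_def by blast
  show ?thesis
    by (rule that[of vs es])
      (use u unique_geodesic_walk_between unique_geodesic_distinct unique_geodesic_length in auto)
next
  case False
  obtain vs es where "walk_between K x y vs es" "distinct vs" "length es = walk_dist K x y"
    using walk_dist_attained[OF assms] by blast
  with False show ?thesis by (intro that) auto
qed

definition parade_weight :: "('v, 'e) mgraph \<Rightarrow> 'v \<Rightarrow> 'v \<Rightarrow> nat" where
  "parade_weight K x y = walk_dist K x y + (if has_unique_geodesic K x y then 1 else 0)"

lemma parade_weight_unique_geodesic:
  assumes "unique_geodesic K vs es"
  shows "parade_weight K (hd vs) (last vs) = length vs"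
proof -
  have "has_unique_geodesic K (hd vs) (last vs)"
    using assms unfolding has_unique_geodesic_def by blast
  with unique_geodesic_length[OF assms] walk_length[of K vs es] assms show ?thesis
    unfolding parade_weight_def unique_geodesic_def by simp
qed

lemma parade_weight_le_length:
  assumes "walk_between K x y vs es"
  shows "parade_weight K x y \<le> length vs"
  using walk_dist_le[OF assms] walk_length[of K vs es] assms
  unfolding parade_weight_def walk_between_def by simp

lemma parade_weight_commute: "parade_weight K x y = parade_weight K y x"
  unfolding parade_weight_def
  using walk_dist_commute has_unique_geodesic_commute by (metis (full_types))

lemma parade_weight_prefix:
  assumes geo: "walk_between K x y (vs1 @ vs2) (es1 @ f # es2)"
      "length (es1 @ f # es2) = walk_dist K x y"
      "has_unique_geodesic K x y \<Longrightarrow> unique_geodesic K (vs1 @ vs2) (es1 @ f # es2)"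
    and split: "walk K vs1 es1" "walk K vs2 es2" "f \<in> edges K" "ends K f = {last vs1, hd vs2}"
  shows "length es1 + (if has_unique_geodesic K x y then 1 else 0) \<le> parade_weight K x (last vs1)"
proof (cases "has_unique_geodesic K x y")
  case True
  have u: "unique_geodesic K vs1 es1" using unique_geodesic_prefix[OF geo(3)[OF True] split] .
  have "hd vs1 = x" using geo(1) walk_not_Nil[OF split(1)] unfolding walk_between_def by simp
  with parade_weight_unique_geodesic[OF u] walk_length[OF split(1)] True show ?thesis by simp
next
  case False
  have ne: "vs1 \<noteq> []" "vs2 \<noteq> []" using split walk_not_Nil by auto
  then have x: "hd vs1 = x" and y: "last vs2 = y" using geo(1) unfolding walk_between_def by auto
  have "walk K ([last vs1] @ vs2) ([] @ f # es2)"
    using split walk_set_verts[OF split(1)] ne by (intro walk_append_edge) auto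
  then have tail: "walk_between K (last vs1) y (last vs1 # vs2) (f # es2)"
    using y ne unfolding walk_between_def by simp
  have head: "walk_between K x (last vs1) vs1 es1"
    using split(1) x unfolding walk_between_def by simp
  have "walk_dist K x y \<le> walk_dist K x (last vs1) + walk_dist K (last vs1) y"
    using walk_dist_triangle walk_between_reachable[OF head] walk_between_reachable[OF tail] .
  with walk_dist_le[OF tail] geo(2) False show ?thesis
    unfolding parade_weight_def by simp
qed

section \<open>Components and the spectator potential\<close>

definition component :: "('v, 'e) mgraph \<Rightarrow> 'v \<Rightarrow> 'v set" where
  "component K u = {z. reachable K u z}"

lemma component_subset_verts: "component K u \<subseteq> verts K"
  unfolding component_def using reachable_verts by fast

lemma finite_component: "finite (verts K) \<Longrightarrow> finite (component K u)"
  using finite_subset[OF component_subset_verts] .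

lemma component_self: "u \<in> verts K \<Longrightarrow> u \<in> component K u"
  unfolding component_def by (simp add: reachable_refl)

lemma component_closed: "x \<in> component K u \<Longrightarrow> reachable K x y \<Longrightarrow> y \<in> component K u"
  unfolding component_def by (auto intro: reachable_trans)

lemma component_closed_sym: "y \<in> component K u \<Longrightarrow> reachable K x y \<Longrightarrow> x \<in> component K u"
  using component_closed reachable_sym by fast

lemma component_reachable: "x \<in> component K u \<Longrightarrow> y \<in> component K u \<Longrightarrow> reachable K x y"
  unfolding component_def by (auto intro: reachable_trans reachable_sym)

lemma walk_subset_component:
  "walk K vs es \<Longrightarrow> hd vs \<in> component K u \<Longrightarrow> set vs \<subseteq> component K u"
  using walk_reachable_hd component_closed by fast

lemma walk_disjoint_component:
  assumes "walk K vs es" "z \<in> set vs" "z \<notin> component K u"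
  shows "set vs \<inter> component K u = {}"
proof -
  have "w \<notin> component K u" if "w \<in> set vs" for w
  proof
    assume "w \<in> component K u"
    moreover have "reachable K w z"
      using reachable_trans[OF reachable_sym[OF walk_reachable_hd[OF assms(1) that]]
          walk_reachable_hd[OF assms(1) assms(2)]] .
    ultimately show False using component_closed[of w K u z] assms(3) by blast
  qed
  then show ?thesis by blast
qed

definition max_parade_weight :: "('v, 'e) mgraph \<Rightarrow> 'v \<Rightarrow> nat" where
  "max_parade_weight K u =
     Max ((\<lambda>(x, y). parade_weight K x y) ` (component K u \<times> component K u))"

lemma parade_weight_le_max:
  assumes "finite (verts K)" "x \<in> component K u" "y \<in> component K u"
  shows "parade_weight K x y \<le> max_parade_weight K u"
  unfolding max_parade_weight_def
  by (rule Max_ge) (use assms finite_component[OF assms(1), of u] in auto)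

lemma max_parade_weight_attained:
  assumes "finite (verts K)" "u \<in> verts K"
  obtains x y where "x \<in> component K u" "y \<in> component K u"
    "max_parade_weight K u = parade_weight K x y"
proof -
  have "max_parade_weight K u \<in> (\<lambda>(x, y). parade_weight K x y) ` (component K u \<times> component K u)"
    unfolding max_parade_weight_def
    by (rule Max_in)
      (use finite_component[OF assms(1), of u] component_self[OF assms(2)] in auto)
  with that show ?thesis by auto
qed

definition spectator_potential :: "('v, 'e) mgraph \<Rightarrow> nat" where
  "spectator_potential K = Max ((\<lambda>u. card (component K u) - max_parade_weight K u) ` verts K)"

lemma spectator_potential_ge:
  "finite (verts K) \<Longrightarrow> u \<in> verts K \<Longrightarrow>
   card (component K u) - max_parade_weight K u \<le> spectator_potential K"
  unfolding spectator_potential_def by (rule Max_ge) auto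

lemma spectator_potential_attained:
  assumes "finite (verts K)" "verts K \<noteq> {}"
  obtains u where "u \<in> verts K" "spectator_potential K = card (component K u) - max_parade_weight K u"
proof -
  have "spectator_potential K \<in> (\<lambda>u. card (component K u) - max_parade_weight K u) ` verts K"
    unfolding spectator_potential_def by (rule Max_in) (use assms in auto)
  with that show ?thesis by blast
qed

lemma spectator_potential_mono:
  assumes fin: "finite (verts K)" "finite (verts K')" "verts K' \<noteq> {}"
    and dominated: "\<And>u'. u' \<in> verts K' \<Longrightarrow> \<exists>u\<in>verts K. \<forall>x\<in>component K u. \<forall>y\<in>component K u.
       \<exists>x'\<in>component K' u'. \<exists>y'\<in>component K' u'.
         parade_weight K x y + card (component K' u') \<le> parade_weight K' x' y' + card (component K u)"
  shows "spectator_potential K' \<le> spectator_potential K"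
proof -
  obtain u' where u': "u' \<in> verts K'"
    "spectator_potential K' = card (component K' u') - max_parade_weight K' u'"
    using spectator_potential_attained[OF fin(2,3)] by blast
  from dominated[OF u'(1)] obtain u where u: "u \<in> verts K"
    and dom: "\<forall>x\<in>component K u. \<forall>y\<in>component K u. \<exists>x'\<in>component K' u'. \<exists>y'\<in>component K' u'.
      parade_weight K x y + card (component K' u') \<le> parade_weight K' x' y' + card (component K u)"
    by blast
  obtain x y where xy: "x \<in> component K u" "y \<in> component K u"
    "max_parade_weight K u = parade_weight K x y"
    using max_parade_weight_attained[OF fin(1) u] by blast
  with dom obtain x' y' where "x' \<in> component K' u'" "y' \<in> component K' u'"
    "parade_weight K x y + card (component K' u') \<le> parade_weight K' x' y' + card (component K u)"
    by blast
  with parade_weight_le_max[OF fin(2)] xy(3)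
  have "max_parade_weight K u + card (component K' u') \<le>
      max_parade_weight K' u' + card (component K u)"
    by fastforce
  with u' spectator_potential_ge[OF fin(1) u] show ?thesis by linarith
qed

lemma finite_usp_lengths:
  assumes "finite (verts K)"
  shows "finite {length vs | vs es. is_usp K vs es}"
proof (rule finite_subset)
  show "{length vs | vs es. is_usp K vs es} \<subseteq> {..card (verts K)}"
  proof
    fix n assume "n \<in> {length vs | vs es. is_usp K vs es}"
    then obtain vs es where "n = length vs" "unique_geodesic K vs es"
      by (auto simp: is_usp_iff_unique_geodesic)
    with distinct_length_le_card[OF assms walk_set_verts unique_geodesic_distinct]
    show "n \<in> {..card (verts K)}" unfolding unique_geodesic_def by auto
  qed
qed simp

lemma usp_ge: "finite (verts K) \<Longrightarrow> unique_geodesic K vs es \<Longrightarrow> length vs \<le> usp K"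
  unfolding usp_def by (rule Max_ge[OF finite_usp_lengths]) (auto simp: is_usp_iff_unique_geodesic)

lemma usp_attained:
  assumes "mgraph K"
  obtains vs es where "unique_geodesic K vs es" "length vs = usp K"
proof -
  have fin: "finite (verts K)" and "verts K \<noteq> {}" using assms unfolding mgraph_def by auto
  then obtain v where "v \<in> verts K" by blast
  then have "unique_geodesic K [v] []" by (rule unique_geodesic_singleton)
  then have "{length vs | vs es. is_usp K vs es} \<noteq> {}" by (auto simp: is_usp_iff_unique_geodesic)
  from Max_in[OF finite_usp_lengths[OF fin] this] that show ?thesis
    unfolding usp_def by (auto simp: is_usp_iff_unique_geodesic)
qed

lemma spectator_potential_le_sp:
  assumes "mgraph K"
  shows "spectator_potential K \<le> sp K"
proof -
  have fin: "finite (verts K)" and "verts K \<noteq> {}" using assms unfolding mgraph_def by auto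
  obtain vs es where P: "unique_geodesic K vs es" "length vs = usp K"
    using usp_attained[OF assms] .
  have walk: "walk K vs es" using P(1) unfolding unique_geodesic_def by blast
  obtain w where w: "w \<in> verts K"
    "spectator_potential K = card (component K w) - max_parade_weight K w"
    using spectator_potential_attained[OF fin \<open>verts K \<noteq> {}\<close>] by blast
  have card_C: "card (component K w) \<le> card (verts K)"
    using card_mono[OF fin component_subset_verts] .
  show ?thesis
  proof (cases "hd vs \<in> component K w")
    case True
    with walk walk_not_Nil[OF walk] have "last vs \<in> component K w"
      using walk_subset_component by fastforce
    with True have "usp K \<le> max_parade_weight K w"
      using parade_weight_le_max[OF fin] parade_weight_unique_geodesic[OF P(1)] P(2) by metis
    with w card_C show ?thesis unfolding sp_def by linarith
  next
    case False
    have "set vs \<inter> component K w = {}"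
      using walk_disjoint_component[OF walk hd_in_set[OF walk_not_Nil[OF walk]] False] .
    then have "length vs + card (component K w) \<le> card (verts K)"
      using card_Un_disjoint[of "set vs" "component K w"] finite_component[OF fin]
        card_mono[OF fin, of "set vs \<union> component K w"] component_subset_verts[of K w]
        walk_set_verts[OF walk] distinct_card[OF unique_geodesic_distinct[OF P(1)]]
      by auto
    with w P(2) show ?thesis unfolding sp_def by linarith
  qed
qed

section \<open>Minor operations do not increase the potential\<close>

definition subgraph :: "('v, 'e) mgraph \<Rightarrow> ('v, 'e) mgraph \<Rightarrow> bool" where
  "subgraph K' K \<longleftrightarrow> verts K' \<subseteq> verts K \<and> edges K' \<subseteq> edges K \<and>
     (\<forall>f\<in>edges K'. ends K' f = ends K f)"

lemma walk_subgraph: "subgraph K' K \<Longrightarrow> walk K' vs es \<Longrightarrow> walk K vs es"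
  by (induction K' vs es rule: walk.induct) (auto simp: subgraph_def)

lemma walk_between_subgraph:
  "subgraph K' K \<Longrightarrow> walk_between K' x y vs es \<Longrightarrow> walk_between K x y vs es"
  unfolding walk_between_def using walk_subgraph by blast

lemma component_subgraph: "subgraph K' K \<Longrightarrow> component K' u \<subseteq> component K u"
  unfolding component_def reachable_def by (auto dest: walk_between_subgraph)

lemma walk_dist_subgraph_le:
  assumes "subgraph K' K" "reachable K' x y"
  shows "walk_dist K x y \<le> walk_dist K' x y"
proof -
  obtain vs es where "walk_between K' x y vs es" "length es = walk_dist K' x y"
    using walk_dist_attained[OF assms(2)] by blast
  with walk_dist_le[OF walk_between_subgraph[OF assms(1) this(1)]] show ?thesis by simp
qed

text \<open>A geodesic of the subgraph that is no longer than in \<open>K\<close> is the unique geodesic of \<open>K\<close>.\<close>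

lemma parade_weight_subgraph_le:
  assumes sub: "subgraph K' K" and reach: "reachable K' x y"
  shows "parade_weight K x y \<le> parade_weight K' x y"
proof (cases "has_unique_geodesic K x y \<and> walk_dist K' x y = walk_dist K x y")
  case True
  then obtain vs es where u: "unique_geodesic K vs es" "hd vs = x" "last vs = y"
    unfolding has_unique_geodesic_def by blast
  obtain ws fs where ws: "walk_between K' x y ws fs" "length fs = walk_dist K' x y"
    using walk_dist_attained[OF reach] by blast
  with True u have "ws = vs" "fs = es"
    using unique_geodesicD[OF u(1), of ws fs] walk_between_subgraph[OF sub ws(1)]
      unique_geodesic_length[OF u(1)] by auto
  with ws(1) have "walk K' vs es" unfolding walk_between_def by simp
  moreover have "ws' = vs \<and> fs' = es"
    if "walk_between K' (hd vs) (last vs) ws' fs'" "length fs' \<le> length es" for ws' fs'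
    using unique_geodesicD[OF u(1) walk_between_subgraph[OF sub that(1)] that(2)] .
  ultimately have "unique_geodesic K' vs es" unfolding unique_geodesic_def by blast
  with u have "has_unique_geodesic K' x y" unfolding has_unique_geodesic_def by blast
  with True show ?thesis unfolding parade_weight_def by simp
next
  case False
  with walk_dist_subgraph_le[OF sub reach] show ?thesis
    unfolding parade_weight_def by auto
qed

locale isolated_vertex_deletion =
  fixes K K' :: "('v, 'e) mgraph" and v :: 'v
  assumes verts_del: "verts K' = verts K - {v}" and edges_del: "edges K' = edges K"
    and ends_del: "ends K' = ends K" and isolated: "\<forall>f\<in>edges K. v \<notin> ends K f"
begin

lemma subgraph: "subgraph K' K"
  unfolding subgraph_def using verts_del edges_del ends_del by auto

lemma walk_del: "walk K vs es \<Longrightarrow> hd vs \<noteq> v \<Longrightarrow> walk K' vs es"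
proof (induction es arbitrary: vs)
  case Nil
  then show ?case using verts_del by (cases vs; cases "tl vs") auto
next
  case (Cons f es)
  then obtain x w rest where vs: "vs = x # w # rest" by (cases vs; cases "tl vs") auto
  with isolated Cons.prems have "w \<noteq> v" by auto
  with Cons vs verts_del edges_del ends_del show ?case by auto
qed

lemma reachable_del_iff:
  assumes "x \<noteq> v"
  shows "reachable K' x y \<longleftrightarrow> reachable K x y"
proof
  assume "reachable K' x y"
  then obtain vs es where "walk_between K' x y vs es" unfolding reachable_def by blast
  then show "reachable K x y" by (intro walk_between_reachable walk_between_subgraph[OF subgraph])
next
  assume "reachable K x y"
  then obtain vs es where "walk_between K x y vs es" unfolding reachable_def by blast
  with assms have "walk_between K' x y vs es" using walk_del unfolding walk_between_def by simp
  then show "reachable K' x y" by (rule walk_between_reachable)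
qed

lemma component_del: "u \<noteq> v \<Longrightarrow> component K' u = component K u"
  unfolding component_def using reachable_del_iff by auto

lemma spectator_potential_le:
  assumes "finite (verts K)" "verts K' \<noteq> {}"
  shows "spectator_potential K' \<le> spectator_potential K"
proof (rule spectator_potential_mono)
  show "finite (verts K)" "finite (verts K')" "verts K' \<noteq> {}" using assms verts_del by auto
  fix u assume "u \<in> verts K'"
  then have u: "u \<in> verts K" and C: "component K' u = component K u"
    using verts_del component_del by auto
  show "\<exists>u'\<in>verts K. \<forall>x\<in>component K u'. \<forall>y\<in>component K u'.
      \<exists>x'\<in>component K' u. \<exists>y'\<in>component K' u.
        parade_weight K x y + card (component K' u) \<le> parade_weight K' x' y' + card (component K u')"
  proof (intro bexI[OF _ u] ballI)
    fix x y assume xy: "x \<in> component K u" "y \<in> component K u"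
    with C have "reachable K' x y" using component_reachable[of x K' u y] by simp
    with C xy show "\<exists>x'\<in>component K' u. \<exists>y'\<in>component K' u.
        parade_weight K x y + card (component K' u) \<le> parade_weight K' x' y' + card (component K u)"
      using parade_weight_subgraph_le[OF subgraph] by fastforce
  qed
qed

end

locale edge_deletion =
  fixes K K' :: "('v, 'e) mgraph" and e :: 'e
  assumes verts_del: "verts K' = verts K" and edges_del: "edges K' = edges K - {e}"
    and ends_del: "ends K' = ends K" and finite_verts: "finite (verts K)"
begin

lemma subgraph: "subgraph K' K"
  unfolding subgraph_def using verts_del edges_del ends_del by auto

lemma walk_del: "walk K vs es \<Longrightarrow> e \<notin> set es \<Longrightarrow> walk K' vs es"
proof (induction es arbitrary: vs)
  case Nil
  then show ?case using verts_del by (cases vs; cases "tl vs") auto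
next
  case (Cons f es)
  then obtain x w rest where "vs = x # w # rest" by (cases vs; cases "tl vs") auto
  with Cons verts_del edges_del ends_del show ?case by auto
qed

lemma walk_reachable_del:
  assumes walk: "walk K vs es" and "distinct es" "z \<in> set vs"
  shows "reachable K' (hd vs) z \<or> reachable K' z (last vs)"
proof (cases "e \<in> set es")
  case True
  then obtain es1 es2 where es: "es = es1 @ e # es2" by (meson split_list)
  with assms(2) have "e \<notin> set es1" "e \<notin> set es2" by auto
  obtain vs1 vs2 where vs: "vs = vs1 @ vs2" "walk K vs1 es1" "walk K vs2 es2"
    using walk_split_edge[of K vs es1 e es2] walk es by blast
  then have "walk K' vs1 es1" "walk K' vs2 es2" "vs1 \<noteq> []" "vs2 \<noteq> []"
    using walk_del \<open>e \<notin> set es1\<close> \<open>e \<notin> set es2\<close> walk_not_Nil by auto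
  moreover have "z \<in> set vs1 \<or> z \<in> set vs2" using vs(1) assms(3) by simp
  ultimately show ?thesis
    using walk_reachable_hd[of K' vs1 es1 z] walk_reachable_last[of K' vs2 es2 z] vs(1) by auto
next
  case False
  with walk have "walk K' vs es" by (rule walk_del)
  with assms(3) show ?thesis using walk_reachable_hd by auto
qed

lemma geodesic_split_at_deleted_edge:
  assumes walk: "walk_between K x y vs es" and "distinct vs" and "\<not> reachable K' x y"
  obtains vs1 vs2 es1 es2 where "vs = vs1 @ vs2" "es = es1 @ e # es2"
    "walk K' vs1 es1" "walk K' vs2 es2" "walk K vs1 es1" "walk K vs2 es2"
    "e \<in> edges K" "ends K e = {last vs1, hd vs2}"
proof -
  have w: "walk K vs es" using walk unfolding walk_between_def by blast
  have "e \<in> set es"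
  proof (rule ccontr)
    assume "e \<notin> set es"
    with walk have "walk_between K' x y vs es"
      using walk_del[OF w] unfolding walk_between_def by simp
    from walk_between_reachable[OF this] assms(3) show False by simp
  qed
  then obtain es1 es2 where es: "es = es1 @ e # es2" by (meson split_list)
  with walk_distinct_edges[OF w assms(2)] have "e \<notin> set es1" "e \<notin> set es2" by auto
  obtain vs1 vs2 where vs: "vs = vs1 @ vs2" "walk K vs1 es1" "walk K vs2 es2"
    "e \<in> edges K" "ends K e = {last vs1, hd vs2}"
    using walk_split_edge[of K vs es1 e es2] w es by blast
  have "walk K' vs1 es1" "walk K' vs2 es2"
    using walk_del[OF vs(2) \<open>e \<notin> set es1\<close>] walk_del[OF vs(3) \<open>e \<notin> set es2\<close>] .
  with that vs es show ?thesis by blast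
qed

lemma parade_weight_del_disconnected:
  assumes x: "x \<in> component K' u" and y: "y \<in> component K u" and "\<not> reachable K' x y"
  shows "\<exists>p\<in>component K' u.
    parade_weight K x y \<le> parade_weight K' x p + card (component K u - component K' u)"
proof -
  have xC: "x \<in> component K u" using x component_subgraph[OF subgraph] by blast
  obtain vs es where geo: "walk_between K x y vs es" "distinct vs" "length es = walk_dist K x y"
    "has_unique_geodesic K x y \<Longrightarrow> unique_geodesic K vs es"
    using geodesic_exists[OF component_reachable[OF xC y]] by blast
  obtain vs1 vs2 es1 es2 where split: "vs = vs1 @ vs2" "es = es1 @ e # es2"
    "walk K' vs1 es1" "walk K' vs2 es2" "walk K vs1 es1" "walk K vs2 es2"
    "e \<in> edges K" "ends K e = {last vs1, hd vs2}"
    using geodesic_split_at_deleted_edge[OF geo(1,2) assms(3)] by blast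
  note geo' = geo[unfolded split(1,2)]
  have ne: "vs1 \<noteq> []" "vs2 \<noteq> []" using split(3,4) walk_not_Nil by auto
  with geo'(1) have ends: "hd vs1 = x" "last vs2 = y" unfolding walk_between_def by auto
  have reach: "reachable K' x (last vs1)"
    using walk_reachable_hd[OF split(3) last_in_set[OF ne(1)]] ends(1) by simp
  have "y \<notin> component K' u" using assms(3) component_reachable[OF x] by blast
  then have "set vs2 \<inter> component K' u = {}"
    using walk_disjoint_component[OF split(4) last_in_set[OF ne(2)]] ends(2) by simp
  moreover have "set vs \<subseteq> component K u"
    using walk_subset_component[of K vs es u] geo(1) xC unfolding walk_between_def by simp
  ultimately have "set vs2 \<subseteq> component K u - component K' u" using split(1) by auto
  moreover have "distinct vs2" using geo'(2) by simp
  ultimately have "length vs2 \<le> card (component K u - component K' u)"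
    using distinct_length_le_card finite_Diff finite_component[OF finite_verts] by metis
  moreover have "length es1 + (if has_unique_geodesic K x y then 1 else 0) \<le>
      parade_weight K x (last vs1)"
    using parade_weight_prefix[OF geo'(1,3,4) split(5-8)] .
  moreover have "parade_weight K x y = length es1 + (if has_unique_geodesic K x y then 1 else 0) +
      length vs2"
    using geo'(3) walk_length[OF split(6)] unfolding parade_weight_def by simp
  ultimately have "parade_weight K x y \<le>
      parade_weight K' x (last vs1) + card (component K u - component K' u)"
    using parade_weight_subgraph_le[OF subgraph reach] by linarith
  with component_closed[OF x reach] show ?thesis by blast
qed

lemma parade_weight_del_from_component:
  assumes x: "x \<in> component K' u" and y: "y \<in> component K u"
  shows "\<exists>x'\<in>component K' u. \<exists>y'\<in>component K' u.
    parade_weight K x y \<le> parade_weight K' x' y' + card (component K u - component K' u)"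
proof (cases "reachable K' x y")
  case True
  then have "y \<in> component K' u" by (rule component_closed[OF x])
  moreover have "parade_weight K x y \<le> parade_weight K' x y + card (component K u - component K' u)"
    using parade_weight_subgraph_le[OF subgraph True] by linarith
  ultimately show ?thesis using x by blast
next
  case False
  with parade_weight_del_disconnected[OF x y] x show ?thesis by blast
qed

lemma parade_weight_del:
  assumes u: "u \<in> verts K" and x: "x \<in> component K u" and y: "y \<in> component K u"
  shows "\<exists>x'\<in>component K' u. \<exists>y'\<in>component K' u.
    parade_weight K x y \<le> parade_weight K' x' y' + card (component K u - component K' u)"
proof -
  consider "x \<in> component K' u" | "y \<in> component K' u"
    | "x \<notin> component K' u" "y \<notin> component K' u" by blast
  then show ?thesis
  proof cases
    case 1
    from parade_weight_del_from_component[OF 1 y] show ?thesis .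
  next
    case 2
    from parade_weight_del_from_component[OF 2 x] show ?thesis
      by (simp add: parade_weight_commute[of K x y])
  next
    case 3
    obtain vs es where geo: "walk_between K x y vs es" "distinct vs"
      using walk_dist_attained[OF component_reachable[OF x y]] by blast
    then have walk: "walk K vs es" and ends: "hd vs = x" "last vs = y"
      unfolding walk_between_def by auto
    have "set vs \<subseteq> component K u - component K' u"
    proof
      fix z assume z: "z \<in> set vs"
      have "reachable K' x z \<or> reachable K' z y"
        using walk_reachable_del[OF walk walk_distinct_edges[OF walk geo(2)] z] ends by simp
      with 3 have "z \<notin> component K' u"
        using component_closed_sym[of z K' u x] component_closed[of z K' u y] by blast
      moreover have "z \<in> component K u" using walk_subset_component[OF walk] ends(1) x z by auto
      ultimately show "z \<in> component K u - component K' u" by blast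
    qed
    from distinct_length_le_card[OF finite_Diff[OF finite_component[OF finite_verts]] this geo(2)]
    have "length vs \<le> card (component K u - component K' u)" .
    with parade_weight_le_length[OF geo(1)]
    have "parade_weight K x y \<le> parade_weight K' u u + card (component K u - component K' u)"
      by linarith
    moreover have "u \<in> component K' u" using component_self[of u K'] u verts_del by simp
    ultimately show ?thesis by blast
  qed
qed

lemma spectator_potential_le:
  assumes "verts K \<noteq> {}"
  shows "spectator_potential K' \<le> spectator_potential K"
proof (rule spectator_potential_mono)
  show "finite (verts K)" "finite (verts K')" "verts K' \<noteq> {}"
    using finite_verts assms verts_del by auto
  fix u assume "u \<in> verts K'"
  then have u: "u \<in> verts K" using verts_del by simp
  have sub: "component K' u \<subseteq> component K u" by (rule component_subgraph[OF subgraph])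
  have fin: "finite (component K u)" by (rule finite_component[OF finite_verts])
  have card_C: "card (component K u) = card (component K' u) + card (component K u - component K' u)"
    using card_Diff_subset[OF finite_subset[OF sub fin] sub] card_mono[OF fin sub] by simp
  show "\<exists>u'\<in>verts K. \<forall>x\<in>component K u'. \<forall>y\<in>component K u'.
      \<exists>x'\<in>component K' u. \<exists>y'\<in>component K' u.
        parade_weight K x y + card (component K' u) \<le> parade_weight K' x' y' + card (component K u')"
  proof (intro bexI[OF _ u] ballI)
    fix x y assume "x \<in> component K u" "y \<in> component K u"
    then obtain x' y' where "x' \<in> component K' u" "y' \<in> component K' u"
      "parade_weight K x y \<le> parade_weight K' x' y' + card (component K u - component K' u)"
      using parade_weight_del[OF u] by blast
    moreover from this(3) card_C
    have "parade_weight K x y + card (component K' u) \<le> parade_weight K' x' y' + card (component K u)"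
      by linarith
    ultimately show "\<exists>x'\<in>component K' u. \<exists>y'\<in>component K' u.
        parade_weight K x y + card (component K' u) \<le> parade_weight K' x' y' + card (component K u)"
      by blast
  qed
qed

end

locale edge_contraction =
  fixes K K' :: "('v, 'e) mgraph" and e :: 'e and a b :: 'v
  assumes verts_con: "verts K' = verts K - {b}" and edges_con: "edges K' = edges K - {e}"
    and ends_con: "ends K' = (\<lambda>f. (\<lambda>x. if x = b then a else x) ` ends K f)"
    and e: "e \<in> edges K" "ends K e = {a, b}" "a \<noteq> b"
    and mgraph: "mgraph K"
begin

definition merge :: "'v \<Rightarrow> 'v" where
  "merge x = (if x = b then a else x)"

lemma ends_merge: "ends K' f = merge ` ends K f"
  unfolding ends_con merge_def ..

lemma finite_verts: "finite (verts K)"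
  using mgraph unfolding mgraph_def by blast

lemma a_in_verts: "a \<in> verts K" and b_in_verts: "b \<in> verts K"
  using e mgraph unfolding mgraph_def by auto

lemma merge_in_verts: "x \<in> verts K \<Longrightarrow> merge x \<in> verts K'"
  using verts_con a_in_verts e(3) unfolding merge_def by auto

lemma merge_eq_merge: "merge x = merge y \<Longrightarrow> x \<noteq> y \<Longrightarrow> {x, y} = {a, b} \<and> merge x = a"
  using e(3) unfolding merge_def by (auto split: if_splits)

lemma walk_contracted_edge: "{x, y} = {a, b} \<Longrightarrow> walk_between K x y [x, y] [e]"
  using e a_in_verts b_in_verts unfolding walk_between_def by (auto simp: doubleton_eq_iff)

lemma reachable_merge: "reachable K x y \<Longrightarrow> reachable K' (merge x) (merge y)"
proof -
  have "reachable K' (merge (hd vs)) (merge (last vs))" if "walk K vs es" for vs es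
    using that
  proof (induction es arbitrary: vs)
    case Nil
    then obtain v where "vs = [v]" "v \<in> verts K" by (cases vs; cases "tl vs") auto
    then show ?case using reachable_refl[OF merge_in_verts] by simp
  next
    case (Cons f es)
    then obtain v w rest where vs: "vs = v # w # rest" by (cases vs; cases "tl vs") auto
    with Cons.prems have f: "f \<in> edges K" "ends K f = {v, w}" "v \<in> verts K"
      and tail: "walk K (w # rest) es" by auto
    then have "w \<in> verts K" using walk_set_verts[OF tail] by simp
    have "reachable K' (merge v) (merge w)"
    proof (cases "f = e")
      case True
      with f e have "merge v = merge w" unfolding merge_def by (auto simp: doubleton_eq_iff)
      then show ?thesis using reachable_refl[OF merge_in_verts[OF \<open>w \<in> verts K\<close>]] by simp
    next
      case False
      with f have "walk_between K' (merge v) (merge w) [merge v, merge w] [f]"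
        using edges_con ends_merge merge_in_verts f(3) \<open>w \<in> verts K\<close>
        unfolding walk_between_def by auto
      then show ?thesis by (rule walk_between_reachable)
    qed
    with Cons.IH[OF tail] vs show ?case using reachable_trans by fastforce
  qed
  then show "reachable K x y \<Longrightarrow> reachable K' (merge x) (merge y)"
    unfolding reachable_def walk_between_def by blast
qed

lemma ends_lift:
  assumes "f \<in> edges K" "merge ` ends K f = {v', w'}" "v' \<noteq> w'"
  obtains p q where "ends K f = {p, q}" "merge p = v'" "merge q = w'"
proof -
  obtain p where p: "p \<in> ends K f" "merge p = v'" using assms(2) by (metis imageE insertI1)
  obtain q where q: "q \<in> ends K f" "merge q = w'" using assms(2) by (metis imageE insertI1 insertI2)
  have "card (ends K f) = 2" using assms(1) mgraph unfolding mgraph_def by blast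
  with p q assms(3) have "ends K f = {p, q}" by (auto simp: card_2_iff)
  with p q that show ?thesis by blast
qed

text \<open>A path of the contracted graph lifts to a walk between any preimages of its ends by
  reinserting \<open>e\<close>, which is needed at most once: where the path visits \<open>a\<close>.\<close>

lemma walk_lift:
  assumes "walk K' vs' es'" "distinct vs'" "x \<in> verts K" "y \<in> verts K"
    "merge x = hd vs'" "merge y = last vs'"
  shows "\<exists>vs es. walk_between K x y vs es \<and> filter (\<lambda>f. f \<noteq> e) es = es' \<and>
    length es \<le> length es' + (if a \<in> set vs' then 1 else 0)"
  using assms
proof (induction es' arbitrary: vs' x)
  case Nil
  then obtain v' where vs': "vs' = [v']" by (cases vs'; cases "tl vs'") auto
  show ?case
  proof (cases "x = y")
    case True
    with Nil show ?thesis unfolding walk_between_def by (intro exI[of _ "[x]"] exI[of _ "[]"]) auto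
  next
    case False
    with Nil vs' merge_eq_merge[of x y] have "{x, y} = {a, b}" "v' = a" by auto
    with vs' walk_contracted_edge show ?thesis by (intro exI[of _ "[x, y]"] exI[of _ "[e]"]) auto
  qed
next
  case (Cons f es')
  then obtain v' w' rest where vs': "vs' = v' # w' # rest" by (cases vs'; cases "tl vs'") auto
  with Cons.prems have f: "f \<in> edges K" "f \<noteq> e" "merge ` ends K f = {v', w'}" "v' \<noteq> w'"
    and tail: "walk K' (w' # rest) es'" "distinct (w' # rest)"
    using edges_con ends_merge by auto
  obtain p q where pq: "ends K f = {p, q}" "merge p = v'" "merge q = w'"
    using ends_lift[OF f(1,3,4)] .
  have "p \<in> verts K" "q \<in> verts K" using pq(1) f(1) mgraph unfolding mgraph_def by auto
  from Cons.IH[OF tail \<open>q \<in> verts K\<close> Cons.prems(4)] pq(3) vs' Cons.prems(6)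
  obtain ws fs where ws: "walk_between K q y ws fs" "filter (\<lambda>f. f \<noteq> e) fs = es'"
    "length fs \<le> length es' + (if a \<in> set (w' # rest) then 1 else 0)"
    by auto
  have step: "walk_between K p y (p # ws) (f # fs)"
    using ws(1) f(1) pq(1) \<open>p \<in> verts K\<close> unfolding walk_between_def
    by (auto intro: walk_Cons dest: walk_not_Nil)
  show ?case
  proof (cases "x = p")
    case True
    with step ws(2,3) f(2) vs' Cons.prems(2) show ?thesis
      by (intro exI[of _ "p # ws"] exI[of _ "f # fs"]) (auto split: if_splits)
  next
    case False
    with Cons.prems(5) vs' pq(2) merge_eq_merge[of x p] have "{x, p} = {a, b}" "v' = a" by auto
    with Cons.prems(2) vs' have "a \<notin> set (w' # rest)" by auto
    from walk_between_append[OF walk_contracted_edge[OF \<open>{x, p} = {a, b}\<close>] step]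
    have "walk_between K x y (x # p # ws) (e # f # fs)" by simp
    with ws(2,3) f(2) vs' \<open>v' = a\<close> \<open>a \<notin> set (w' # rest)\<close> show ?thesis
      by (intro exI[of _ "x # p # ws"] exI[of _ "e # f # fs"]) auto
  qed
qed

lemma reachable_lift:
  assumes "reachable K' (merge x) (merge y)" "x \<in> verts K" "y \<in> verts K"
  shows "reachable K x y"
proof -
  obtain ws fs where w: "walk_between K' (merge x) (merge y) ws fs" "distinct ws"
    using walk_dist_attained[OF assms(1)] by blast
  then have "walk K' ws fs" "merge x = hd ws" "merge y = last ws"
    unfolding walk_between_def by auto
  from walk_lift[OF this(1) w(2) assms(2,3) this(2,3)]
  obtain vs es where "walk_between K x y vs es" by blast
  then show ?thesis by (rule walk_between_reachable)
qed

lemma component_merge: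
  assumes u: "u \<in> verts K'"
  shows "component K' u = merge ` component K u"
proof -
  have uK: "u \<in> verts K" and mu: "merge u = u" using u verts_con unfolding merge_def by auto
  show ?thesis
  proof
    show "merge ` component K u \<subseteq> component K' u"
    proof
      fix z assume "z \<in> merge ` component K u"
      then obtain w where "reachable K u w" "z = merge w" unfolding component_def by blast
      with reachable_merge[of u w] mu show "z \<in> component K' u" unfolding component_def by simp
    qed
    show "component K' u \<subseteq> merge ` component K u"
    proof
      fix z assume "z \<in> component K' u"
      then have r: "reachable K' (merge u) z" using mu unfolding component_def by simp
      then have "z \<in> verts K'" using reachable_verts[OF r] by simp
      then have z: "z \<in> verts K" "merge z = z" using verts_con unfolding merge_def by auto
      from reachable_lift[of u z] r z uK mu have "z \<in> component K u"
        unfolding component_def by simp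
      from image_eqI[where f = merge, OF z(2)[symmetric] this] show "z \<in> merge ` component K u" .
    qed
  qed
qed

lemma card_component_merge:
  assumes u: "u \<in> verts K'"
  shows "card (component K u) = card (component K' u) + (if a \<in> component K' u then 1 else 0)"
proof -
  have ab: "reachable K a b" using walk_between_reachable[OF walk_contracted_edge] by simp
  have fin: "finite (component K u)" by (rule finite_component[OF finite_verts])
  have merge_b: "merge b = a" and merge_other: "\<And>z. z \<noteq> b \<Longrightarrow> merge z = z"
    unfolding merge_def by auto
  have a_iff_b: "a \<in> component K' u \<longleftrightarrow> b \<in> component K u"
  proof
    assume "a \<in> component K' u"
    then obtain z where z: "z \<in> component K u" "merge z = a" using component_merge[OF u] by auto
    show "b \<in> component K u"
    proof (cases "z = b")
      case False
      with z merge_other have "a \<in> component K u" by simp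
      then show ?thesis by (rule component_closed[OF _ ab])
    qed (use z in simp)
  next
    assume "b \<in> component K u"
    from image_eqI[where f = merge, OF merge_b[symmetric] this] show "a \<in> component K' u"
      using component_merge[OF u] by simp
  qed
  show ?thesis
  proof (cases "b \<in> component K u")
    case True
    then have "a \<in> component K u" by (rule component_closed_sym[OF _ ab])
    then have "merge ` component K u = component K u - {b}"
      using True e(3) by (auto simp: merge_def image_iff)
    then have "card (component K' u) = card (component K u) - 1"
      using component_merge[OF u] card_Diff_singleton[OF True] by simp
    moreover have "card (component K u) > 0" using True fin card_gt_0_iff by blast
    ultimately show ?thesis using True a_iff_b by simp
  next
    case False
    then have "merge ` component K u = component K u"
      by (auto simp: merge_def image_iff)
    with False a_iff_b component_merge[OF u] show ?thesis by simp
  qed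
qed

lemma walk_lift_component:
  assumes u: "u \<in> verts K'" and x: "x \<in> component K u" and y: "y \<in> component K u"
    and w: "walk_between K' (merge x) (merge y) ws fs" "distinct ws"
  obtains vs es where "walk_between K x y vs es" "filter (\<lambda>f. f \<noteq> e) es = fs"
    "length es \<le> length fs + (if a \<in> component K' u then 1 else 0)"
proof -
  have walk: "walk K' ws fs" "merge x = hd ws" "merge y = last ws"
    using w(1) unfolding walk_between_def by auto
  have "merge x \<in> component K' u" using component_merge[OF u] x by blast
  with walk have "set ws \<subseteq> component K' u" using walk_subset_component by metis
  then have a: "(if a \<in> set ws then 1 else 0) \<le> (if a \<in> component K' u then 1 else (0::nat))"
    by auto
  have "x \<in> verts K" "y \<in> verts K" using x y component_subset_verts[of K u] by auto
  from walk_lift[OF walk(1) w(2) this walk(2,3)] obtain vs es where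
    "walk_between K x y vs es" "filter (\<lambda>f. f \<noteq> e) es = fs"
    "length es \<le> length fs + (if a \<in> set ws then 1 else 0)"
    by blast
  with a that show ?thesis by simp
qed

lemma walk_dist_merge_le:
  assumes u: "u \<in> verts K'" and x: "x \<in> component K u" and y: "y \<in> component K u"
  shows "walk_dist K x y \<le> walk_dist K' (merge x) (merge y) + (if a \<in> component K' u then 1 else 0)"
proof -
  obtain ws fs where ws: "walk_between K' (merge x) (merge y) ws fs" "distinct ws"
    "length fs = walk_dist K' (merge x) (merge y)"
    using walk_dist_attained[OF reachable_merge[OF component_reachable[OF x y]]] by blast
  from walk_lift_component[OF u x y ws(1,2)] obtain vs es where
    "walk_between K x y vs es" "length es \<le> length fs + (if a \<in> component K' u then 1 else 0)"
    by blast
  with walk_dist_le[OF this(1)] ws(3) show ?thesis by simp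
qed

text \<open>If contracting \<open>e\<close> shortens no geodesic between \<open>x\<close> and \<open>y\<close>, every geodesic of the
  contracted graph lifts to the unique one of \<open>K\<close> and is recovered from it by dropping \<open>e\<close>.\<close>

lemma has_unique_geodesic_merge:
  assumes u: "u \<in> verts K'" and x: "x \<in> component K u" and y: "y \<in> component K u"
    and uniq: "has_unique_geodesic K x y"
    and dist: "walk_dist K x y = walk_dist K' (merge x) (merge y) + (if a \<in> component K' u then 1 else 0)"
  shows "has_unique_geodesic K' (merge x) (merge y)"
proof -
  obtain ps hs where P: "unique_geodesic K ps hs" "hd ps = x" "last ps = y"
    using uniq unfolding has_unique_geodesic_def by blast
  have edges_from_P: "fs = filter (\<lambda>f. f \<noteq> e) hs"
    if ws: "walk_between K' (merge x) (merge y) ws fs"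
      "length fs \<le> walk_dist K' (merge x) (merge y)" for ws fs
  proof -
    obtain vs es where vs: "walk_between K x y vs es" "filter (\<lambda>f. f \<noteq> e) es = fs"
      "length es \<le> length fs + (if a \<in> component K' u then 1 else 0)"
      using walk_lift_component[OF u x y ws(1) shortest_walk_distinct(1)[OF ws]] by blast
    with ws(2) dist unique_geodesic_length[OF P(1)] P(2,3) have "length es \<le> length hs" by simp
    with vs(1) P(2,3) have "es = hs" using unique_geodesicD[OF P(1)] by simp
    with vs(2) show ?thesis by simp
  qed
  obtain qs gs where Q: "walk_between K' (merge x) (merge y) qs gs"
    "length gs = walk_dist K' (merge x) (merge y)"
    using walk_dist_attained[OF reachable_merge[OF component_reachable[OF x y]]] by blast
  have "ws = qs \<and> fs = gs"
    if ws: "walk_between K' (hd qs) (last qs) ws fs" "length fs \<le> length gs" for ws fs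
  proof -
    from ws Q have "walk_between K' (merge x) (merge y) ws fs"
      unfolding walk_between_def by simp
    from edges_from_P[OF this] edges_from_P[OF Q(1)] ws(2) Q(2) have "fs = gs" by simp
    with ws(1) Q(1) show ?thesis
      using walk_eq_if_edges_eq unfolding walk_between_def by metis
  qed
  with Q(1) have "unique_geodesic K' qs gs" unfolding unique_geodesic_def walk_between_def by blast
  with Q(1) show ?thesis unfolding has_unique_geodesic_def walk_between_def by blast
qed

lemma parade_weight_merge:
  assumes u: "u \<in> verts K'" and x: "x \<in> component K u" and y: "y \<in> component K u"
  shows "parade_weight K x y \<le>
    parade_weight K' (merge x) (merge y) + (if a \<in> component K' u then 1 else 0)"
proof (cases "has_unique_geodesic K x y \<and>
    walk_dist K x y = walk_dist K' (merge x) (merge y) + (if a \<in> component K' u then 1 else 0)")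
  case True
  with has_unique_geodesic_merge[OF u x y] show ?thesis unfolding parade_weight_def by simp
next
  case False
  with walk_dist_merge_le[OF u x y] show ?thesis
    unfolding parade_weight_def by (cases "has_unique_geodesic K x y") (auto dest: le_neq_implies_less)
qed

lemma spectator_potential_le: "spectator_potential K' \<le> spectator_potential K"
proof (rule spectator_potential_mono)
  show "finite (verts K)" "finite (verts K')" "verts K' \<noteq> {}"
    using finite_verts verts_con a_in_verts e(3) by auto
  fix u assume u: "u \<in> verts K'"
  then have uK: "u \<in> verts K" using verts_con by simp
  show "\<exists>u'\<in>verts K. \<forall>x\<in>component K u'. \<forall>y\<in>component K u'.
      \<exists>x'\<in>component K' u. \<exists>y'\<in>component K' u.
        parade_weight K x y + card (component K' u) \<le> parade_weight K' x' y' + card (component K u')"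
  proof (intro bexI[OF _ uK] ballI)
    fix x y assume xy: "x \<in> component K u" "y \<in> component K u"
    then have "merge x \<in> component K' u" "merge y \<in> component K' u"
      using component_merge[OF u] by auto
    moreover have "parade_weight K x y + card (component K' u) \<le>
        parade_weight K' (merge x) (merge y) + card (component K u)"
      using parade_weight_merge[OF u xy] card_component_merge[OF u] by simp
    ultimately show "\<exists>x'\<in>component K' u. \<exists>y'\<in>component K' u.
        parade_weight K x y + card (component K' u) \<le> parade_weight K' x' y' + card (component K u)"
      by blast
  qed
qed

end

lemma spectator_potential_minor_step:
  assumes step: "minor_step K K'" and K: "mgraph K"
  shows "spectator_potential K' \<le> spectator_potential K"
proof -
  have fin: "finite (verts K)" "verts K \<noteq> {}" using K unfolding mgraph_def by auto
  have "verts K' \<noteq> {}" using step unfolding minor_step_def mgraph_def by blast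
  from step consider
    (vertex) v where "\<forall>f\<in>edges K. v \<notin> ends K f"
      "K' = \<lparr>verts = verts K - {v}, edges = edges K, ends = ends K\<rparr>"
  | (edge) e where "K' = \<lparr>verts = verts K, edges = edges K - {e}, ends = ends K\<rparr>"
  | (contract) e a b where "e \<in> edges K" "ends K e = {a, b}" "a \<noteq> b"
      "K' = \<lparr>verts = verts K - {b}, edges = edges K - {e},
              ends = (\<lambda>f. (\<lambda>x. if x = b then a else x) ` ends K f)\<rparr>"
    unfolding minor_step_def by blast
  then show ?thesis
  proof cases
    case vertex
    then interpret isolated_vertex_deletion K K' v by unfold_locales auto
    show ?thesis using spectator_potential_le fin(1) \<open>verts K' \<noteq> {}\<close> .
  next
    case edge
    then interpret edge_deletion K K' e using fin(1) by unfold_locales auto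
    show ?thesis using spectator_potential_le fin(2) .
  next
    case contract
    then interpret edge_contraction K K' e a b using K by unfold_locales auto
    show ?thesis by (rule spectator_potential_le)
  qed
qed

lemma spectator_potential_minor_steps:
  assumes "minor_step\<^sup>*\<^sup>* K K'" "mgraph K"
  shows "mgraph K' \<and> spectator_potential K' \<le> spectator_potential K"
  using assms
proof (induction rule: rtranclp_induct)
  case (step K1 K2)
  then have "mgraph K2" unfolding minor_step_def by blast
  with step spectator_potential_minor_step[OF step(2)] show ?case by fastforce
qed simp

section \<open>Isomorphisms and the diameter bound\<close>

locale mgraph_isomorphism =
  fixes A :: "('v, 'e) mgraph" and B :: "('w, 'f) mgraph" and f :: "'v \<Rightarrow> 'w" and g :: "'e \<Rightarrow> 'f"
  assumes bij_verts: "bij_betw f (verts A) (verts B)" and bij_edges: "bij_betw g (edges A) (edges B)"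
    and ends_map: "\<forall>e\<in>edges A. ends B (g e) = f ` ends A e"
begin

lemma walk_map: "walk A vs es \<Longrightarrow> walk B (map f vs) (map g es)"
proof (induction es arbitrary: vs)
  case Nil
  then show ?case using bij_verts by (cases vs; cases "tl vs") (auto simp: bij_betw_def)
next
  case (Cons h es)
  then obtain x w rest where vs: "vs = x # w # rest" by (cases vs; cases "tl vs") auto
  with Cons.prems have "walk A (w # rest) es" by simp
  from Cons.IH[OF this] Cons.prems vs bij_verts bij_edges ends_map show ?case
    by (auto simp: bij_betw_def)
qed

lemma walk_between_map:
  "walk_between A x y vs es \<Longrightarrow> walk_between B (f x) (f y) (map f vs) (map g es)"
  unfolding walk_between_def by (auto simp: walk_map hd_map last_map dest: walk_not_Nil)

lemma walk_dist_map_le: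
  assumes "reachable A x y"
  shows "reachable B (f x) (f y) \<and> walk_dist B (f x) (f y) \<le> walk_dist A x y"
proof -
  obtain vs es where w: "walk_between A x y vs es" "length es = walk_dist A x y"
    using walk_dist_attained[OF assms] by blast
  from walk_between_map[OF w(1)]
  have "walk_between B (f x) (f y) (map f vs) (map g es)" .
  with walk_between_reachable[OF this] walk_dist_le[OF this] w(2) show ?thesis by simp
qed

lemma inverse:
  assumes "mgraph A"
  shows "mgraph_isomorphism B A (inv_into (verts A) f) (inv_into (edges A) g)"
proof
  show "bij_betw (inv_into (verts A) f) (verts B) (verts A)" by (rule bij_betw_inv_into[OF bij_verts])
  show "bij_betw (inv_into (edges A) g) (edges B) (edges A)" by (rule bij_betw_inv_into[OF bij_edges])
  show "\<forall>e'\<in>edges B. ends A (inv_into (edges A) g e') = inv_into (verts A) f ` ends B e'"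
  proof
    fix e' assume "e' \<in> edges B"
    then obtain e where e: "e \<in> edges A" "e' = g e" using bij_edges by (auto simp: bij_betw_def)
    then have "inv_into (edges A) g e' = e" using bij_edges by (simp add: bij_betw_def)
    moreover have "ends A e \<subseteq> verts A" using assms e(1) unfolding mgraph_def by blast
    ultimately show "ends A (inv_into (edges A) g e') = inv_into (verts A) f ` ends B e'"
      using e ends_map bij_verts by (simp add: bij_betw_def inv_into_image_cancel)
  qed
qed

lemma unique_geodesic_map:
  assumes A: "mgraph A" and u: "unique_geodesic A vs es"
  shows "unique_geodesic B (map f vs) (map g es)"
proof -
  interpret inv: mgraph_isomorphism B A "inv_into (verts A) f" "inv_into (edges A) g"
    by (rule inverse[OF A])
  have inv_f: "\<And>x. x \<in> verts A \<Longrightarrow> inv_into (verts A) f (f x) = x"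
    using bij_betw_imp_inj_on[OF bij_verts] by simp
  have f_inv: "\<And>y. y \<in> verts B \<Longrightarrow> f (inv_into (verts A) f y) = y"
    using bij_betw_imp_surj_on[OF bij_verts] f_inv_into_f by metis
  have g_inv: "\<And>y. y \<in> edges B \<Longrightarrow> g (inv_into (edges A) g y) = y"
    using bij_betw_imp_surj_on[OF bij_edges] f_inv_into_f by metis
  have w: "walk_between A (hd vs) (last vs) vs es" by (rule unique_geodesic_walk_between[OF u])
  then have hd_last: "hd vs \<in> verts A" "last vs \<in> verts A"
    using walk_set_verts[of A vs es] walk_not_Nil[of A vs es] unfolding walk_between_def by auto
  have wB: "walk_between B (f (hd vs)) (f (last vs)) (map f vs) (map g es)"
    by (rule walk_between_map[OF w])
  have "ws = map f vs \<and> fs = map g es"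
    if ws: "walk_between B (hd (map f vs)) (last (map f vs)) ws fs"
      "length fs \<le> length (map g es)" for ws fs
  proof -
    have ws': "walk_between B (f (hd vs)) (f (last vs)) ws fs"
      using ws(1) wB unfolding walk_between_def by simp
    have sub: "set ws \<subseteq> verts B" "set fs \<subseteq> edges B"
      using ws' walk_set_verts[of B ws fs] walk_set_edges[of B ws fs]
      unfolding walk_between_def by auto
    from inv.walk_between_map[OF ws'] inv_f[OF hd_last(1)] inv_f[OF hd_last(2)]
    have "walk_between A (hd vs) (last vs) (map (inv_into (verts A) f) ws)
        (map (inv_into (edges A) g) fs)"
      by simp
    from unique_geodesicD[OF u this] ws(2)
    have "map (inv_into (verts A) f) ws = vs" "map (inv_into (edges A) g) fs = es" by auto
    moreover have "map f (map (inv_into (verts A) f) ws) = ws"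
      unfolding map_map by (rule map_idI) (use sub(1) f_inv in auto)
    moreover have "map g (map (inv_into (edges A) g) fs) = fs"
      unfolding map_map by (rule map_idI) (use sub(2) g_inv in auto)
    ultimately show ?thesis by simp
  qed
  moreover have "walk B (map f vs) (map g es)" using wB unfolding walk_between_def by blast
  ultimately show ?thesis unfolding unique_geodesic_def by blast
qed

end

lemma gdist_eq_walk_dist:
  assumes "reachable K x y"
  shows "gdist K x y = enat (walk_dist K x y)"
proof (rule antisym)
  obtain vs es where "walk_between K x y vs es" "distinct vs" "length es = walk_dist K x y"
    using walk_dist_attained[OF assms] by blast
  then have "(vs, es) \<in> {(vs, es). is_uv_path K x y vs es}"
    by (simp add: is_uv_path_iff_walk_between)
  then have "gdist K x y \<le> enat (length (snd (vs, es)))"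
    unfolding gdist_def by (rule INF_lower)
  with \<open>length es = walk_dist K x y\<close> show "gdist K x y \<le> enat (walk_dist K x y)" by simp
  show "enat (walk_dist K x y) \<le> gdist K x y"
    unfolding gdist_def
  proof (rule INF_greatest)
    fix p assume "p \<in> {(vs, es). is_uv_path K x y vs es}"
    then have "walk_between K x y (fst p) (snd p)"
      by (auto simp: is_uv_path_iff_walk_between)
    from walk_dist_le[OF this] show "enat (walk_dist K x y) \<le> enat (length (snd p))" by simp
  qed
qed

lemma gdist_unreachable:
  assumes "\<not> reachable K x y"
  shows "gdist K x y = \<infinity>"
proof -
  have no_paths: "{(vs, es). is_uv_path K x y vs es} = {}"
    using assms by (auto simp: is_uv_path_iff_walk_between dest: walk_between_reachable)
  show ?thesis unfolding gdist_def no_paths by (simp add: top_enat_def)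
qed

lemma reachable_if_diam_enat:
  assumes "diam K = enat d" "x \<in> verts K" "y \<in> verts K"
  shows "reachable K x y \<and> walk_dist K x y \<le> d"
proof -
  have "gdist K x y \<le> diam K"
    unfolding diam_def by (rule SUP_upper2[OF assms(2)]) (rule SUP_upper[OF assms(3)])
  with assms(1) have "gdist K x y \<le> enat d" by simp
  moreover from this have "reachable K x y" using gdist_unreachable by force
  ultimately show ?thesis using gdist_eq_walk_dist[of K x y] by simp
qed

lemma usp_le_Suc_diam:
  assumes "mgraph K" "diam K = enat d"
  shows "usp K \<le> d + 1"
proof -
  obtain vs es where u: "unique_geodesic K vs es" "length vs = usp K"
    using usp_attained[OF assms(1)] .
  then have "walk K vs es" unfolding unique_geodesic_def by blast
  then have "hd vs \<in> verts K" "last vs \<in> verts K"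
    using walk_set_verts[of K vs es] walk_not_Nil[of K vs es] by auto
  from reachable_if_diam_enat[OF assms(2) this] have "walk_dist K (hd vs) (last vs) \<le> d" by simp
  with unique_geodesic_length[OF u(1)] walk_length[OF \<open>walk K vs es\<close>] u(2) show ?thesis by simp
qed

lemma card_verts_le_spectator_potential:
  assumes K: "mgraph K"
    and close: "\<And>x y. x \<in> verts K \<Longrightarrow> y \<in> verts K \<Longrightarrow> reachable K x y \<and> walk_dist K x y \<le> d"
  shows "card (verts K) \<le> spectator_potential K + max (usp K) d"
proof -
  have fin: "finite (verts K)" and "verts K \<noteq> {}" using K unfolding mgraph_def by auto
  then obtain u where u: "u \<in> verts K" by blast
  have C: "component K u = verts K"
    using component_subset_verts[of K u] close[OF u] unfolding component_def by blast
  obtain x y where xy: "x \<in> verts K" "y \<in> verts K"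
    "max_parade_weight K u = parade_weight K x y"
    using max_parade_weight_attained[OF fin u] C by metis
  have "parade_weight K x y \<le> max (usp K) d"
  proof (cases "has_unique_geodesic K x y")
    case True
    then obtain vs es where "unique_geodesic K vs es" "hd vs = x" "last vs = y"
      unfolding has_unique_geodesic_def by blast
    with parade_weight_unique_geodesic[OF this(1)] usp_ge[OF fin this(1)] show ?thesis by simp
  next
    case False
    with close[OF xy(1,2)] show ?thesis unfolding parade_weight_def by (simp add: le_max_iff_disj)
  qed
  moreover have "card (verts K) - max_parade_weight K u \<le> spectator_potential K"
    using spectator_potential_ge[OF fin u] C by simp
  ultimately show ?thesis using xy(3) by linarith
qed

lemma card_le_sp_of_minor:
  fixes G :: "('w, 'f) mgraph" and H :: "('v, 'e) mgraph"
  assumes G: "mgraph G" "diam G = enat d" and H: "mgraph H" "is_minor G H"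
  shows "card (verts G) \<le> sp H + max (usp G) d"
proof -
  obtain H' where steps: "minor_step\<^sup>*\<^sup>* H H'" and "mg_iso H' G"
    using H(2) unfolding is_minor_def by blast
  then obtain f g where "mgraph_isomorphism H' G f g"
    unfolding mg_iso_def mgraph_isomorphism_def by blast
  then interpret mgraph_isomorphism H' G f g .
  have H': "mgraph H'" "spectator_potential H' \<le> spectator_potential H"
    using spectator_potential_minor_steps[OF steps H(1)] by auto
  interpret inv: mgraph_isomorphism G H' "inv_into (verts H') f" "inv_into (edges H') g"
    by (rule inverse[OF H'(1)])
  have "usp H' \<le> usp G"
  proof -
    obtain vs es where "unique_geodesic H' vs es" "length vs = usp H'"
      using usp_attained[OF H'(1)] .
    with usp_ge[OF _ unique_geodesic_map[OF H'(1) this(1)]] G(1) show ?thesis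
      unfolding mgraph_def by simp
  qed
  moreover have "reachable H' x y \<and> walk_dist H' x y \<le> d"
    if "x \<in> verts H'" "y \<in> verts H'" for x y
  proof -
    have "f x \<in> verts G" "f y \<in> verts G" using that bij_verts by (auto simp: bij_betw_def)
    from reachable_if_diam_enat[OF G(2) this] inv.walk_dist_map_le that
    show ?thesis using bij_betw_imp_inj_on[OF bij_verts] by fastforce
  qed
  then have "card (verts H') \<le> spectator_potential H' + max (usp H') d"
    by (rule card_verts_le_spectator_potential[OF H'(1)])
  moreover have "card (verts H') = card (verts G)" by (rule bij_betw_same_card[OF bij_verts])
  ultimately show ?thesis using H'(2) spectator_potential_le_sp[OF H(1)] by linarith
qed

lemma mgraph_nat_copy:
  assumes G: "mgraph G"
  obtains H :: "(nat, nat) mgraph" where "mgraph H" "mg_iso H G"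
proof -
  have fin: "finite (verts G)" "finite (edges G)"
    and ends: "\<And>e. e \<in> edges G \<Longrightarrow> ends G e \<subseteq> verts G \<and> card (ends G e) = 2"
    using G unfolding mgraph_def by auto
  obtain fv :: "'a \<Rightarrow> nat" where fv: "inj_on fv (verts G)"
    using finite_imp_inj_to_nat_seg[OF fin(1)] by blast
  obtain fe :: "'b \<Rightarrow> nat" where fe: "inj_on fe (edges G)"
    using finite_imp_inj_to_nat_seg[OF fin(2)] by blast
  define H :: "(nat, nat) mgraph" where
    "H = \<lparr>verts = fv ` verts G, edges = fe ` edges G,
          ends = (\<lambda>i. fv ` ends G (inv_into (edges G) fe i))\<rparr>"
  interpret mgraph_isomorphism G H fv fe
    using fv fe unfolding H_def by unfold_locales (auto simp: inj_on_imp_bij_betw)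
  have "ends H i \<subseteq> verts H \<and> card (ends H i) = 2" if "i \<in> edges H" for i
  proof -
    from that obtain e where e: "e \<in> edges G" "i = fe e" unfolding H_def by auto
    then have "ends H i = fv ` ends G e" using fe unfolding H_def by simp
    with ends[OF e(1)] fv show ?thesis
      unfolding H_def by (auto simp: card_image inj_on_subset)
  qed
  with fin G have "mgraph H" unfolding H_def mgraph_def by auto
  moreover interpret inv: mgraph_isomorphism H G "inv_into (verts G) fv" "inv_into (edges G) fe"
    by (rule inverse[OF G])
  have "mg_iso H G"
    unfolding mg_iso_def using inv.bij_verts inv.bij_edges inv.ends_map by blast
  ultimately show ?thesis by (rule that)
qed

lemma sp_floor_attained:
  assumes "mgraph G"
  obtains H :: "(nat, nat) mgraph" where "mgraph H" "is_minor G H" "sp H = sp_floor G"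
proof -
  let ?S = "{sp H | H :: (nat, nat) mgraph. mgraph H \<and> is_minor G H}"
  obtain H :: "(nat, nat) mgraph" where H: "mgraph H" "mg_iso H G"
    using mgraph_nat_copy[OF assms] .
  then have "is_minor G H" unfolding is_minor_def by (intro exI[of _ H]) simp
  with H(1) have "?S \<noteq> {}" by blast
  then have "Inf ?S \<in> ?S" by (rule Inf_nat_def1)
  then obtain H' :: "(nat, nat) mgraph" where "mgraph H'" "is_minor G H'" "sp H' = Inf ?S"
    by auto
  with that show ?thesis unfolding sp_floor_def by simp
qed

theorem theorem4p6:
  fixes G :: "('v, 'e) mgraph"
  assumes "mgraph G"
  shows "enat (card (verts G)) \<le> enat (sp_floor G) + diam G + 1 \<and>
         (enat (usp G) \<le> diam G \<longrightarrow> enat (card (verts G)) \<le> enat (sp_floor G) + diam G)"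
proof (cases "diam G")
  case (enat d)
  obtain H :: "(nat, nat) mgraph" where H: "mgraph H" "is_minor G H" "sp H = sp_floor G"
    using sp_floor_attained[OF assms] .
  have "card (verts G) \<le> sp_floor G + max (usp G) d"
    using card_le_sp_of_minor[OF assms enat H(1,2)] H(3) by simp
  moreover have "usp G \<le> d + 1" by (rule usp_le_Suc_diam[OF assms enat])
  ultimately show ?thesis using enat by (auto simp: one_enat_def max_def split: if_splits)
qed simp

end
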